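(* Fix $m\ge1$ and let $\tilde F(u_1,\dots,u_m;t)=\sum_{n\ge0}\sum_{\pi\in\Pi^{(m)}_n}u_1^{a_1(\pi)}\cdots u_m^{a_m(\pi)}t^{n}$. Then, writing $\tilde F(\mathbf u;t)=\tilde F(u_1,\dots,u_m;t)$, \[ \tilde F(\mathbf u;t)=u_1\cdots u_m+t\,u_1\cdots u_m\,\tilde F(\mathbf u;t)+t\,u_1\,\frac{\tilde F(\mathbf u;t)-u_1\tilde F(1,u_2,\dots,u_m;t)}{u_1-1} +t\sum_{j=2}^m u_1u_2\cdots u_j\,\frac{\tilde F(\mathbf u;t)-\tilde F(u_1,\dots,u_{j-2},u_{j-1}u_j,1,u_{j+1},\dots,u_m;t)}{u_j-1}. \]
   Context: A set partition of $[n]$ is a collection of nonempty pairwise disjoint blocks with union $[n]$ ($n=0$: empty partition). Arcs are pairs $(i,j)$, $i<j$, of consecutive elements (in numerical order) of a block. An $m$-nesting is a set of $m$ arcs $(i_1,j_1),\dots,(i_m,j_m)$ with $i_1<\dots<i_m<j_m<\dots<j_1$. $\Pi^{(m)}_n$ is the set of partitions of $[n]$ with no $(m+1)$-nesting. The label $(a_1(\pi),\dots,a_m(\pi))$ of $\pi\in\Pi^{(m)}_n$ is defined by: $a_j(\pi)=1+$(number of blocks) if $\pi$ has no $j$-nesting; otherwise $a_j(\pi)=1+$(number of blocks whose maximal element exceeds the smallest vertex of the rightmost $j$-nesting), the rightmost $j$-nesting being one whose smallest vertex is maximal among all $j$-nestings. The empty partition has label $(1,\dots,1)$. The identity is one of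 formal power series in $t$ with polynomial coefficients in the $u_i$ (the quotients are polynomial). *)

theory Defs
  imports Main "HOL-Library.Disjoint_Sets" "HOL-Computational_Algebra.Formal_Power_Series"
begin

definition set_partitions :: "nat \<Rightarrow> nat set set set" where
  "set_partitions n = {P. partition_on {1..n} P}"

definition arcs :: "nat set set \<Rightarrow> (nat \<times> nat) set" where
  "arcs P = {(i, j). \<exists>B\<in>P. i \<in> B \<and> j \<in> B \<and> i < j \<and> (\<forall>k\<in>B. \<not> (i < k \<and> k < j))}"

definition is_nesting :: "nat set set \<Rightarrow> nat \<Rightarrow> (nat \<times> nat) list \<Rightarrow> bool" where
  "is_nesting P k xs \<longleftrightarrow> length xs = k \<and> set xs \<subseteq> arcs P \<and>
     sorted_wrt (\<lambda>(i, j) (i', j'). i < i' \<and> j' < j) xs"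

definition has_nesting :: "nat set set \<Rightarrow> nat \<Rightarrow> bool" where
  "has_nesting P k \<longleftrightarrow> (\<exists>xs. is_nesting P k xs)"

definition Pi_m :: "nat \<Rightarrow> nat \<Rightarrow> nat set set set" where
  "Pi_m m n = {P \<in> set_partitions n. \<not> has_nesting P (Suc m)}"

definition rightmost_start :: "nat set set \<Rightarrow> nat \<Rightarrow> nat" where
  "rightmost_start P j = Max {fst (hd xs) | xs. is_nesting P j xs}"

definition label :: "nat set set \<Rightarrow> nat \<Rightarrow> nat" where
  "label P j = (if \<not> has_nesting P j then 1 + card P
     else 1 + card {B \<in> P. Max B > rightmost_start P j})"

definition Fcoeff :: "nat \<Rightarrow> (nat \<Rightarrow> real) \<Rightarrow> nat \<Rightarrow> real" where
  "Fcoeff m u n = (\<Sum>P\<in>Pi_m m n. \<Prod>j=1..m. u j ^ label P j)"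

definition Ftilde :: "nat \<Rightarrow> (nat \<Rightarrow> real) \<Rightarrow> real fps" where
  "Ftilde m u = Abs_fps (Fcoeff m u)"

end

theory Submission
  imports Defs
begin

text \<open>Deleting n+1 from a partition of [n+1] without (m+1)-nestings leaves a partition Q of [n]
  without (m+1)-nestings, from which it is recovered either by adding the singleton {n+1} or by
  appending n+1 to a block B of Q. The only new arc (max B, n+1) is outermost, so it extends the
  (j-1)-nestings starting to the right of max B to j-nestings; writing r_j for the smallest vertex
  of the rightmost j-nesting of Q, no (m+1)-nesting arises iff r_m < max B. Since a_j = 1 + #{blocks
  whose maximum exceeds r_j}, adding a singleton raises every label by one, while appending to a
  block B with r_j < max B < r_(j-1) (where r_0 = n+1) raises a_1, ..., a_(j-1) by one, keeps
  a_(j+1), ..., a_m, and makes a_j equal to 2 + #{blocks whose maximum exceeds max B}. As B runs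
  through these blocks, the new a_j runs through a_(j-1)+1, ..., a_j (with a_0 = 1), so their total
  weight is a geometric sum in u_j, which is the j-th divided-difference term of the equation.\<close>

section \<open>Partitions of an initial segment\<close>

lemma partition_blockD:
  assumes "partition_on {1..(n::nat)} P" "B \<in> P"
  shows "finite B" "B \<noteq> {}" "B \<subseteq> {1..n}"
proof -
  have s: "B \<subseteq> {1..n}" using assms unfolding partition_on_def by auto
  then show "finite B" by (rule finite_subset) simp
  show "B \<noteq> {}" "B \<subseteq> {1..n}" using assms s unfolding partition_on_def by auto
qed

lemma partition_Max_block:
  assumes "partition_on {1..(n::nat)} P" "B \<in> P"
  shows "Max B \<in> B" "1 \<le> Max B" "Max B \<le> n"
  using partition_blockD[OF assms] by (auto, meson Max_in atLeastAtMost_iff subsetD)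

lemma partition_block_eq:
  assumes "partition_on {1..(n::nat)} P" "B \<in> P" "B' \<in> P" "x \<in> B" "x \<in> B'"
  shows "B = B'"
  using assms unfolding partition_on_def disjoint_def by blast

lemma partition_finite:
  assumes "partition_on {1..(n::nat)} P" shows "finite P"
proof -
  have "P \<subseteq> Pow {1..n}" using assms unfolding partition_on_def by auto
  then show ?thesis by (rule finite_subset) (simp add: finite_Pow_iff)
qed

lemma arcsD:
  assumes "partition_on {1..(n::nat)} P" "(i,j) \<in> arcs P"
  shows "1 \<le> i" "i < j" "j \<le> n"
proof -
  obtain B where B: "B \<in> P" "i \<in> B" "j \<in> B" "i < j" using assms(2) unfolding arcs_def by blast
  then have "B \<subseteq> {1..n}" using partition_blockD(3)[OF assms(1)] by blast
  then show "1 \<le> i" "i < j" "j \<le> n" using B by auto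
qed

lemma arc_start_neq_Max:
  assumes "partition_on {1..(n::nat)} P" "(i,j) \<in> arcs P" "B \<in> P"
  shows "i \<noteq> Max B"
proof
  assume h: "i = Max B"
  obtain B' where B': "B' \<in> P" "i \<in> B'" "j \<in> B'" using assms(2) unfolding arcs_def by blast
  have "B' = B"
    using partition_block_eq[OF assms(1) B'(1) assms(3) B'(2)] partition_Max_block(1)[OF assms(1,3)] h
    by simp
  then have "j \<le> Max B" using partition_blockD[OF assms(1,3)] B'(3) by simp
  then show False using arcsD(2)[OF assms(1,2)] h by simp
qed

lemma finite_set_partitions: "finite (set_partitions n)"
  unfolding set_partitions_def by (rule finitely_many_partition_on) simp

lemma finite_Pi_m: "finite (Pi_m m n)"
  unfolding Pi_m_def using finite_set_partitions by simp

section \<open>Nestings in a set of arcs\<close>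

definition nesting_in :: "(nat \<times> nat) set \<Rightarrow> nat \<Rightarrow> (nat \<times> nat) list \<Rightarrow> bool" where
  "nesting_in A k xs \<longleftrightarrow> length xs = k \<and> set xs \<subseteq> A \<and>
     sorted_wrt (\<lambda>(i, j) (i', j'). i < i' \<and> j' < j) xs"

lemma is_nesting_eq_nesting_in: "is_nesting P = nesting_in (arcs P)"
  by (intro ext) (simp add: is_nesting_def nesting_in_def)

definition nesting_starts :: "(nat \<times> nat) set \<Rightarrow> nat \<Rightarrow> nat set" where
  "nesting_starts A k = {fst (hd xs) | xs. nesting_in A k xs}"

text \<open>The smallest vertex of the rightmost k-nesting, or 0 if there is none; since vertices are
  positive, 0 then behaves like a vertex to the left of everything.\<close>
definition rstart_in :: "(nat \<times> nat) set \<Rightarrow> nat \<Rightarrow> nat" where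
  "rstart_in A k = Max (insert 0 (nesting_starts A k))"

definition arcs_within :: "nat \<Rightarrow> (nat \<times> nat) set \<Rightarrow> bool" where
  "arcs_within n A \<longleftrightarrow> (\<forall>(i,j)\<in>A. 1 \<le> i \<and> i < j \<and> j \<le> n)"

lemma arcs_within_arcs: "partition_on {1..(n::nat)} P \<Longrightarrow> arcs_within n (arcs P)"
  unfolding arcs_within_def using arcsD by blast

lemma has_nesting_iff_nesting_starts: "has_nesting P k \<longleftrightarrow> nesting_starts (arcs P) k \<noteq> {}"
  by (auto simp: has_nesting_def nesting_starts_def is_nesting_eq_nesting_in)

lemma nesting_starts_subset:
  assumes "arcs_within n A" "1 \<le> k"
  shows "nesting_starts A k \<subseteq> {1..n}"
proof
  fix s assume "s \<in> nesting_starts A k"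
  then obtain xs where xs: "nesting_in A k xs" "s = fst (hd xs)" unfolding nesting_starts_def by blast
  then have "xs \<noteq> []" using assms(2) unfolding nesting_in_def by auto
  then have "hd xs \<in> A" using xs(1) unfolding nesting_in_def by auto
  then show "s \<in> {1..n}" using assms(1) xs(2) unfolding arcs_within_def by (cases "hd xs") fastforce
qed

lemma finite_nesting_starts: "arcs_within n A \<Longrightarrow> 1 \<le> k \<Longrightarrow> finite (nesting_starts A k)"
  by (rule finite_subset[OF nesting_starts_subset]) simp_all

lemma rstart_in_le:
  assumes "arcs_within n A" "1 \<le> k"
  shows "rstart_in A k \<le> n"
  using finite_nesting_starts[OF assms] nesting_starts_subset[OF assms] unfolding rstart_in_def by auto

lemma le_rstart_in: "arcs_within n A \<Longrightarrow> 1 \<le> k \<Longrightarrow> s \<in> nesting_starts A k \<Longrightarrow> s \<le> rstart_in A k"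
  unfolding rstart_in_def using finite_nesting_starts by simp

lemma rstart_in_mem: "arcs_within n A \<Longrightarrow> 1 \<le> k \<Longrightarrow> 0 < rstart_in A k \<Longrightarrow> rstart_in A k \<in> nesting_starts A k"
  unfolding rstart_in_def using finite_nesting_starts
  by (metis Max_in finite_insert insertE insert_not_empty less_irrefl)

lemma rstart_in_empty: "nesting_starts A k = {} \<Longrightarrow> rstart_in A k = 0"
  unfolding rstart_in_def by simp

lemma nesting_start_arc:
  assumes "s \<in> nesting_starts A k" "1 \<le> k"
  shows "\<exists>t. (s,t) \<in> A"
proof -
  obtain xs where xs: "nesting_in A k xs" "s = fst (hd xs)" using assms(1) unfolding nesting_starts_def by blast
  then have "xs \<noteq> []" using assms(2) unfolding nesting_in_def by auto
  then have "hd xs \<in> A" using xs(1) unfolding nesting_in_def by auto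
  then show ?thesis using xs(2) by (metis prod.collapse)
qed

lemma nesting_starts_Suc:
  assumes "s \<in> nesting_starts A (Suc k)" "1 \<le> k"
  shows "\<exists>s'\<in>nesting_starts A k. s < s'"
proof -
  obtain xs where xs: "nesting_in A (Suc k) xs" "s = fst (hd xs)"
    using assms(1) unfolding nesting_starts_def by blast
  have l: "length xs = Suc k" using xs(1) unfolding nesting_in_def by simp
  then obtain x xs' where e1: "xs = x # xs'" "length xs' = k" by (cases xs) auto
  then obtain y ys where "xs' = y # ys" using assms(2) by (cases xs') auto
  with e1 have e: "xs = x # y # ys" by simp
  have "nesting_in A k (y # ys)" using xs(1) e unfolding nesting_in_def by auto
  then have "fst y \<in> nesting_starts A k" unfolding nesting_starts_def by force
  moreover have "s < fst y" using xs e unfolding nesting_in_def by (cases x, cases y) auto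
  ultimately show ?thesis by blast
qed

lemma rstart_in_Suc_le:
  assumes "arcs_within n A" "1 \<le> k"
  shows "rstart_in A (Suc k) \<le> rstart_in A k"
proof (cases "rstart_in A (Suc k) = 0")
  case False
  then have "rstart_in A (Suc k) \<in> nesting_starts A (Suc k)" using rstart_in_mem assms by simp
  then obtain s' where "s' \<in> nesting_starts A k" "rstart_in A (Suc k) < s'"
    using nesting_starts_Suc assms(2) by blast
  then show ?thesis using le_rstart_in[OF assms] by fastforce
qed simp

lemma rstart_in_antimono:
  assumes "arcs_within n A" "1 \<le> i" "i \<le> k"
  shows "rstart_in A k \<le> rstart_in A i"
  using assms(3)
proof (induction k rule: dec_induct)
  case base then show ?case by simp
next
  case (step k)
  then show ?case using rstart_in_Suc_le[OF assms(1), of k] assms(2) by simp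
qed

lemma sorted_nesting_hd_le:
  fixes y z :: "nat \<times> nat"
  assumes "sorted_wrt (\<lambda>(i, j) (i', j'). i < i' \<and> j' < j) (y # ys)" "z \<in> set (y#ys)"
  shows "fst y \<le> fst z"
proof (cases "z = y")
  case False
  then have "z \<in> set ys" using assms(2) by simp
  then have "(\<lambda>(i, j) (i', j'). i < i' \<and> j' < j) y z" using assms(1) by simp
  then show ?thesis by (cases y, cases z) auto
qed simp

lemma nesting_in_insert_outerD:
  assumes ok: "arcs_within n A" and N: "n < N" and h: "nesting_in (insert (b,N) A) k xs"
  shows "nesting_in A k xs \<or>
    (\<exists>ys. xs = (b,N) # ys \<and> nesting_in A (k-1) ys \<and> (ys = [] \<or> b < fst (hd ys)))"
proof (cases "(b,N) \<in> set xs")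
  case False
  then show ?thesis using h unfolding nesting_in_def by auto
next
  case True
  then obtain x xs' where e: "xs = x # xs'" by (cases xs) auto
  have sw: "sorted_wrt (\<lambda>(i, j) (i', j'). i < i' \<and> j' < j) (x # xs')"
    using h e unfolding nesting_in_def by simp
  have x: "x = (b,N)"
  proof (rule ccontr)
    assume ne: "x \<noteq> (b,N)"
    then have "x \<in> A" using h e unfolding nesting_in_def by auto
    then have "snd x \<le> n" using ok unfolding arcs_within_def by auto
    moreover have "(b,N) \<in> set xs'" using True e ne by simp
    then have "N < snd x" using sw by (cases x) auto
    ultimately show False using N by simp
  qed
  then have "(b,N) \<notin> set xs'" using sw by auto
  then have "nesting_in A (k-1) xs'" using h e sw unfolding nesting_in_def by auto
  moreover have "xs' = [] \<or> b < fst (hd xs')"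
    using sw x by (cases xs') (auto split: prod.splits)
  ultimately show ?thesis using e x by blast
qed

lemma nesting_in_insert_outerI:
  assumes ok: "arcs_within n A" and N: "n < N" and k: "1 \<le> k"
    and ys: "nesting_in A (k-1) ys" "ys = [] \<or> b < fst (hd ys)"
  shows "nesting_in (insert (b,N) A) k ((b,N) # ys)"
proof -
  have "b < fst z \<and> snd z < N" if z: "z \<in> set ys" for z
  proof -
    obtain y ys' where e: "ys = y # ys'" using z by (cases ys) auto
    have "fst y \<le> fst z" using sorted_nesting_hd_le[of y ys' z] ys(1) z e unfolding nesting_in_def by simp
    moreover have "z \<in> A" using ys(1) z unfolding nesting_in_def by auto
    then have "snd z \<le> n" using ok unfolding arcs_within_def by auto
    ultimately show ?thesis using ys(2) e N by simp
  qed
  then show ?thesis using ys k unfolding nesting_in_def by (auto split: prod.splits)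
qed

lemma ex_nesting_right_of_iff:
  assumes ok: "arcs_within n A" and k: "1 \<le> k"
  shows "(\<exists>ys. nesting_in A (k-1) ys \<and> (ys = [] \<or> b < fst (hd ys))) \<longleftrightarrow>
    k = 1 \<or> b < rstart_in A (k-1)"
proof
  assume "\<exists>ys. nesting_in A (k-1) ys \<and> (ys = [] \<or> b < fst (hd ys))"
  then obtain ys where ys: "nesting_in A (k-1) ys" "ys = [] \<or> b < fst (hd ys)" by blast
  show "k = 1 \<or> b < rstart_in A (k-1)"
  proof (cases "k = 1")
    case False
    then have "ys \<noteq> []" using ys k unfolding nesting_in_def by auto
    then have "b < fst (hd ys)" using ys by simp
    moreover have "fst (hd ys) \<in> nesting_starts A (k-1)" using ys(1) unfolding nesting_starts_def by blast
    then have "fst (hd ys) \<le> rstart_in A (k-1)" using le_rstart_in[OF ok, of "k-1"] False k by simp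
    ultimately show ?thesis by simp
  qed simp
next
  assume h: "k = 1 \<or> b < rstart_in A (k-1)"
  show "\<exists>ys. nesting_in A (k-1) ys \<and> (ys = [] \<or> b < fst (hd ys))"
  proof (cases "k = 1")
    case True then show ?thesis unfolding nesting_in_def by auto
  next
    case False
    then have "rstart_in A (k-1) \<in> nesting_starts A (k-1)" using rstart_in_mem[OF ok, of "k-1"] h k by simp
    then obtain ys where "nesting_in A (k-1) ys" "rstart_in A (k-1) = fst (hd ys)"
      unfolding nesting_starts_def by blast
    then show ?thesis using h False by auto
  qed
qed

lemma nesting_starts_insert_outer:
  assumes ok: "arcs_within n A" and N: "n < N" and k: "1 \<le> k"
  shows "nesting_starts (insert (b,N) A) k =
    nesting_starts A k \<union> (if k = 1 \<or> b < rstart_in A (k-1) then {b} else {})"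
proof (intro equalityI subsetI)
  fix s assume "s \<in> nesting_starts (insert (b,N) A) k"
  then obtain xs where xs: "nesting_in (insert (b,N) A) k xs" "s = fst (hd xs)"
    unfolding nesting_starts_def by blast
  from nesting_in_insert_outerD[OF ok N xs(1)]
  show "s \<in> nesting_starts A k \<union> (if k = 1 \<or> b < rstart_in A (k-1) then {b} else {})"
  proof
    assume "nesting_in A k xs" then show ?thesis using xs(2) unfolding nesting_starts_def by blast
  next
    assume "\<exists>ys. xs = (b,N) # ys \<and> nesting_in A (k-1) ys \<and> (ys = [] \<or> b < fst (hd ys))"
    then show ?thesis using ex_nesting_right_of_iff[OF ok k, of b] xs(2) by auto
  qed
next
  fix s assume s: "s \<in> nesting_starts A k \<union> (if k = 1 \<or> b < rstart_in A (k-1) then {b} else {})"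
  show "s \<in> nesting_starts (insert (b,N) A) k"
  proof (cases "s \<in> nesting_starts A k")
    case True
    then show ?thesis unfolding nesting_starts_def nesting_in_def by blast
  next
    case False
    then have "s = b" "k = 1 \<or> b < rstart_in A (k-1)" using s by (auto split: if_splits)
    then obtain ys where "nesting_in A (k-1) ys" "ys = [] \<or> b < fst (hd ys)"
      using ex_nesting_right_of_iff[OF ok k] by blast
    then have "nesting_in (insert (b,N) A) k ((b,N) # ys)" by (rule nesting_in_insert_outerI[OF ok N k])
    then show ?thesis using \<open>s = b\<close> unfolding nesting_starts_def by force
  qed
qed

lemma rstart_in_insert_outer:
  assumes ok: "arcs_within n A" and N: "n < N" and k: "1 \<le> k"
  shows "rstart_in (insert (b,N) A) k =
    (if k = 1 \<or> b < rstart_in A (k-1) then max (rstart_in A k) b else rstart_in A k)"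
proof (cases "k = 1 \<or> b < rstart_in A (k-1)")
  case True
  then have "nesting_starts (insert (b,N) A) k = insert b (nesting_starts A k)"
    using nesting_starts_insert_outer[OF ok N k] by simp
  then have "rstart_in (insert (b,N) A) k = Max (insert b (insert 0 (nesting_starts A k)))"
    unfolding rstart_in_def by (simp add: insert_commute)
  also have "\<dots> = max b (rstart_in A k)"
    unfolding rstart_in_def using finite_nesting_starts[OF ok k] by (simp add: Max_insert)
  finally show ?thesis using True by (simp add: max.commute)
next
  case False
  then show ?thesis using nesting_starts_insert_outer[OF ok N k] unfolding rstart_in_def by simp
qed

section \<open>Adding the element n+1\<close>

abbreviation add_singleton :: "nat \<Rightarrow> nat set set \<Rightarrow> nat set set" where
  "add_singleton n Q \<equiv> insert {Suc n} Q"

abbreviation append_to :: "nat \<Rightarrow> nat set set \<Rightarrow> nat set \<Rightarrow> nat set set" where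
  "append_to n Q B \<equiv> insert (insert (Suc n) B) (Q - {B})"

definition consecutive :: "nat set \<Rightarrow> nat \<Rightarrow> nat \<Rightarrow> bool" where
  "consecutive B i j \<longleftrightarrow> i \<in> B \<and> j \<in> B \<and> i < j \<and> (\<forall>k\<in>B. \<not> (i < k \<and> k < j))"

lemma arcs_eq_consecutive: "arcs P = {(i,j). \<exists>B\<in>P. consecutive B i j}"
  unfolding arcs_def consecutive_def by simp

lemma not_consecutive_singleton: "\<not> consecutive {N} i j"
  unfolding consecutive_def by auto

lemma consecutive_insert_Max:
  assumes "finite B" "B \<noteq> {}" "\<forall>x\<in>B. x < N"
  shows "consecutive (insert N B) i j \<longleftrightarrow> consecutive B i j \<or> (i = Max B \<and> j = N)"
proof
  assume h: "consecutive (insert N B) i j"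
  show "consecutive B i j \<or> (i = Max B \<and> j = N)"
  proof (cases "j = N")
    case True
    then have iB: "i \<in> B" using h unfolding consecutive_def by auto
    have "\<forall>k\<in>B. k \<le> i" using h True assms(3) unfolding consecutive_def by force
    then have "i = Max B" using iB assms(1) by (metis Max_eqI)
    then show ?thesis using True by simp
  next
    case False
    then have "j \<in> B" using h unfolding consecutive_def by auto
    then have "j < N" using assms(3) by auto
    then have "i \<in> B" using h unfolding consecutive_def by auto
    then show ?thesis using h \<open>j \<in> B\<close> unfolding consecutive_def by auto
  qed
next
  assume h: "consecutive B i j \<or> (i = Max B \<and> j = N)"
  show "consecutive (insert N B) i j"
  proof (cases "consecutive B i j")
    case True
    then have "j < N" using assms(3) unfolding consecutive_def by auto
    then show ?thesis using True unfolding consecutive_def by auto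
  next
    case False
    then have e: "i = Max B" "j = N" using h by auto
    have "Max B \<in> B" using assms(1,2) by simp
    then have "Max B < N" using assms(3) by auto
    moreover have "\<forall>k\<in>B. k \<le> Max B" using assms(1) by simp
    ultimately show ?thesis using e \<open>Max B \<in> B\<close> unfolding consecutive_def by force
  qed
qed

lemma Suc_notin_Union:
  assumes "partition_on {1..(n::nat)} Q" shows "Suc n \<notin> \<Union>Q"
  using assms unfolding partition_on_def by auto

lemma arcs_add_singleton: "arcs (add_singleton n Q) = arcs Q"
  unfolding arcs_eq_consecutive using not_consecutive_singleton by auto

lemma arcs_append_to:
  assumes Q: "partition_on {1..(n::nat)} Q" and B: "B \<in> Q"
  shows "arcs (append_to n Q B) = insert (Max B, Suc n) (arcs Q)"
proof -
  have ci: "consecutive (insert (Suc n) B) i j \<longleftrightarrow> consecutive B i j \<or> (i = Max B \<and> j = Suc n)" for i j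
    using consecutive_insert_Max[of B "Suc n"] partition_blockD[OF Q B] by fastforce
  show ?thesis
    unfolding arcs_eq_consecutive using ci B by blast
qed

lemma partition_add_singleton:
  assumes Q: "partition_on {1..(n::nat)} Q"
  shows "partition_on {1..Suc n} (add_singleton n Q)"
proof -
  have d: "disjnt {Suc n} (\<Union>Q)" using Suc_notin_Union[OF Q] by (simp add: disjnt_def)
  have e: "{1..Suc n} - {Suc n} = {1..n}" by auto
  show ?thesis using partition_on_insert[OF d, of "{1..Suc n}"] Q e by simp
qed

lemma partition_remove_block:
  assumes Q: "partition_on X Q" and B: "B \<in> Q"
  shows "partition_on (X - B) (Q - {B})"
proof -
  have e: "Q = insert B (Q - {B})" using B by auto
  have "disjnt B (\<Union>(Q - {B}))" using Q B unfolding partition_on_def disjoint_def disjnt_def by blast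
  then show ?thesis using partition_on_insert[of B "Q - {B}" X] Q e by simp
qed

lemma partition_append_to:
  assumes Q: "partition_on {1..(n::nat)} Q" and B: "B \<in> Q"
  shows "partition_on {1..Suc n} (append_to n Q B)"
proof -
  have r: "partition_on ({1..n} - B) (Q - {B})" using partition_remove_block[OF Q B] .
  have d: "disjnt (insert (Suc n) B) (\<Union>(Q - {B}))"
    using Q B Suc_notin_Union[OF Q] unfolding partition_on_def disjoint_def disjnt_def by blast
  have e: "{1..Suc n} - insert (Suc n) B = {1..n} - B" by auto
  have s: "insert (Suc n) B \<subseteq> {1..Suc n}" using partition_blockD(3)[OF Q B] by auto
  show ?thesis using partition_on_insert[OF d, of "{1..Suc n}"] r e s by simp
qed

definition blocks_above :: "nat set set \<Rightarrow> nat \<Rightarrow> nat" where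
  "blocks_above P x = card {B\<in>P. x < Max B}"

lemma blocks_above_add_singleton:
  assumes Q: "partition_on {1..(n::nat)} Q" and x: "x \<le> n"
  shows "blocks_above (add_singleton n Q) x = Suc (blocks_above Q x)"
proof -
  have "{B\<in>insert {Suc n} Q. x < Max B} = insert {Suc n} {B\<in>Q. x < Max B}" using x by auto
  moreover have "{Suc n} \<notin> Q" using Suc_notin_Union[OF Q] by auto
  moreover have "finite {B\<in>Q. x < Max B}" using partition_finite[OF Q] by simp
  ultimately show ?thesis unfolding blocks_above_def by simp
qed

lemma blocks_above_append_to:
  assumes Q: "partition_on {1..(n::nat)} Q" and B: "B \<in> Q" and x: "x \<le> n"
  shows "blocks_above (append_to n Q B) x + (if x < Max B then 1 else 0) = Suc (blocks_above Q x)"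
proof -
  have fB: "finite B" using partition_blockD[OF Q B] by simp
  have mb: "Max B \<le> n" using partition_Max_block(3)[OF Q B] .
  have "Max (insert (Suc n) B) = max (Suc n) (Max B)"
    using fB partition_blockD(2)[OF Q B] by (rule Max_insert)
  then have M: "Max (insert (Suc n) B) = Suc n" using mb by (simp add: max_def del: Max_le_iff)
  have f: "finite {C\<in>Q - {B}. x < Max C}" using partition_finite[OF Q] by simp
  have ni: "insert (Suc n) B \<notin> Q - {B}" using Suc_notin_Union[OF Q] by auto
  have "{C\<in>append_to n Q B. x < Max C} = insert (insert (Suc n) B) {C\<in>Q - {B}. x < Max C}"
    using x M by auto
  then have new: "blocks_above (append_to n Q B) x = Suc (card {C\<in>Q - {B}. x < Max C})"
    unfolding blocks_above_def using f ni by simp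
  have old: "blocks_above Q x = card {C\<in>Q - {B}. x < Max C} + (if x < Max B then 1 else 0)"
  proof (cases "x < Max B")
    case True
    then have "{C\<in>Q. x < Max C} = insert B {C\<in>Q - {B}. x < Max C}" using B by auto
    then show ?thesis unfolding blocks_above_def using f True by simp
  next
    case False
    then have "{C\<in>Q. x < Max C} = {C\<in>Q - {B}. x < Max C}" using B by auto
    then show ?thesis unfolding blocks_above_def using False by simp
  qed
  show ?thesis using new old by simp
qed

lemma blocks_above_Max_less:
  assumes Q: "partition_on {1..(n::nat)} Q" and B: "B \<in> Q" and x: "x < Max B"
  shows "blocks_above Q (Max B) < blocks_above Q x"
proof -
  have f: "finite Q" using partition_finite[OF Q] .
  have "{C\<in>Q. Max B < Max C} \<subset> {C\<in>Q. x < Max C}" using B x by auto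
  then show ?thesis unfolding blocks_above_def using f by (intro psubset_card_mono) auto
qed

lemma blocks_above_antimono:
  assumes Q: "partition_on {1..(n::nat)} Q" and "x \<le> y"
  shows "blocks_above Q y \<le> blocks_above Q x"
proof -
  have f: "finite Q" using partition_finite[OF Q] .
  have "{C\<in>Q. y < Max C} \<subseteq> {C\<in>Q. x < Max C}" using assms(2) by auto
  then show ?thesis unfolding blocks_above_def using f by (intro card_mono) auto
qed

definition rstart :: "nat set set \<Rightarrow> nat \<Rightarrow> nat" where
  "rstart P k = rstart_in (arcs P) k"

lemma label_eq_blocks_above:
  assumes Q: "partition_on {1..(n::nat)} Q" and k: "1 \<le> k"
  shows "label Q k = Suc (blocks_above Q (rstart Q k))"
proof (cases "has_nesting Q k")
  case True
  have ok: "arcs_within n (arcs Q)" using arcs_within_arcs[OF Q] .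
  have ne: "nesting_starts (arcs Q) k \<noteq> {}" using True has_nesting_iff_nesting_starts by blast
  have "rightmost_start Q k = Max (nesting_starts (arcs Q) k)"
    unfolding rightmost_start_def nesting_starts_def is_nesting_eq_nesting_in by simp
  also have "\<dots> = rstart Q k"
    unfolding rstart_def rstart_in_def using ne finite_nesting_starts[OF ok k] by (simp add: Max_insert)
  finally show ?thesis using True unfolding label_def blocks_above_def by simp
next
  case False
  then have "rstart Q k = 0" unfolding rstart_def using has_nesting_iff_nesting_starts rstart_in_empty by blast
  moreover have "{B\<in>Q. 0 < Max B} = Q" using partition_Max_block(2)[OF Q] by fastforce
  ultimately show ?thesis using False unfolding label_def blocks_above_def by simp
qed

lemma rstart_neq_Max:
  assumes Q: "partition_on {1..(n::nat)} Q" and k: "1 \<le> k" and B: "B \<in> Q"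
  shows "rstart Q k \<noteq> Max B"
proof (cases "rstart Q k = 0")
  case True then show ?thesis using partition_Max_block(2)[OF Q B] by simp
next
  case False
  have ok: "arcs_within n (arcs Q)" using arcs_within_arcs[OF Q] .
  have "rstart Q k \<in> nesting_starts (arcs Q) k" using rstart_in_mem[OF ok k] False unfolding rstart_def by simp
  then obtain t where "(rstart Q k, t) \<in> arcs Q" using nesting_start_arc k by blast
  then show ?thesis using arc_start_neq_Max[OF Q _ B] by blast
qed

lemma Pi_mD: "Q \<in> Pi_m m n \<Longrightarrow> partition_on {1..n} Q \<and> nesting_starts (arcs Q) (Suc m) = {}"
  unfolding Pi_m_def set_partitions_def using has_nesting_iff_nesting_starts by blast

lemma Pi_mI: "partition_on {1..n} Q \<Longrightarrow> nesting_starts (arcs Q) (Suc m) = {} \<Longrightarrow> Q \<in> Pi_m m n"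
  unfolding Pi_m_def set_partitions_def using has_nesting_iff_nesting_starts by blast

lemma rstart_add_singleton: "rstart (add_singleton n Q) k = rstart Q k"
  unfolding rstart_def using arcs_add_singleton by simp

lemma rstart_append_to:
  assumes Q: "partition_on {1..(n::nat)} Q" and B: "B \<in> Q" and k: "1 \<le> k"
  shows "rstart (append_to n Q B) k =
    (if k = 1 \<or> Max B < rstart Q (k-1) then max (rstart Q k) (Max B) else rstart Q k)"
  unfolding rstart_def arcs_append_to[OF Q B]
  using rstart_in_insert_outer[OF arcs_within_arcs[OF Q], of "Suc n" k "Max B"] k by simp

lemma add_singleton_in_Pi_m: "Q \<in> Pi_m m n \<Longrightarrow> add_singleton n Q \<in> Pi_m m (Suc n)"
  using Pi_mD[of Q m n] Pi_mI[of "Suc n" "add_singleton n Q" m] partition_add_singleton arcs_add_singleton by metis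

lemma append_to_in_Pi_m_iff:
  assumes Q: "Q \<in> Pi_m m n" and m: "1 \<le> m" and B: "B \<in> Q"
  shows "append_to n Q B \<in> Pi_m m (Suc n) \<longleftrightarrow> rstart Q m < Max B"
proof -
  have P: "partition_on {1..n} Q" and e: "nesting_starts (arcs Q) (Suc m) = {}" using Pi_mD[OF Q] by auto
  have "nesting_starts (arcs (append_to n Q B)) (Suc m) = (if Max B < rstart Q m then {Max B} else {})"
    unfolding arcs_append_to[OF P B] rstart_def
      using nesting_starts_insert_outer[OF arcs_within_arcs[OF P], of "Suc n" "Suc m" "Max B"] e m
    by simp
  moreover have "rstart Q m \<noteq> Max B" using rstart_neq_Max[OF P m B] .
  ultimately show ?thesis
    using Pi_mD[of "append_to n Q B" m "Suc n"] Pi_mI[OF partition_append_to[OF P B], of m] by (auto split: if_splits)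
qed

lemma label_add_singleton:
  assumes Q: "partition_on {1..(n::nat)} Q" and k: "1 \<le> k"
  shows "label (add_singleton n Q) k = Suc (label Q k)"
proof -
  have "rstart Q k \<le> n" unfolding rstart_def using rstart_in_le[OF arcs_within_arcs[OF Q] k] .
  then show ?thesis
    using label_eq_blocks_above[OF Q k] label_eq_blocks_above[OF partition_add_singleton[OF Q] k]
      rstart_add_singleton blocks_above_add_singleton[OF Q] by simp
qed

lemma rstart_antimono:
  assumes Q: "partition_on {1..(n::nat)} Q" and "1 \<le> i" "i \<le> k"
  shows "rstart Q k \<le> rstart Q i"
  unfolding rstart_def using rstart_in_antimono[OF arcs_within_arcs[OF Q]] assms by blast

lemma label_append_to:
  assumes Q: "partition_on {1..(n::nat)} Q" and B: "B \<in> Q" and k: "1 \<le> k"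
    and j: "1 \<le> j" "rstart Q j < Max B" "j = 1 \<or> Max B < rstart Q (j-1)"
  shows "label (append_to n Q B) k =
    (if k < j then Suc (label Q k) else if k = j then blocks_above Q (Max B) + 2 else label Q k)"
proof -
  let ?b = "Max B"
  have bn: "?b \<le> n" using partition_Max_block(3)[OF Q B] .
  have Lk: "label (append_to n Q B) k =
      Suc (blocks_above (append_to n Q B) (rstart (append_to n Q B) k))"
    using label_eq_blocks_above[OF partition_append_to[OF Q B] k] .
  have Lq: "label Q k = Suc (blocks_above Q (rstart Q k))" using label_eq_blocks_above[OF Q k] .
  have rsn: "rstart Q k \<le> n" unfolding rstart_def using rstart_in_le[OF arcs_within_arcs[OF Q] k] .
  consider "k < j" | "k = j" | "j < k" by linarith
  then show ?thesis
  proof cases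
    case 1
    then have "j \<noteq> 1" using k by simp
    then have "?b < rstart Q (j-1)" using j by simp
    moreover have "rstart Q (j-1) \<le> rstart Q k" using rstart_antimono[OF Q k] 1 by simp
    ultimately have gt: "?b < rstart Q k" by simp
    have "rstart (append_to n Q B) k = rstart Q k"
      using rstart_append_to[OF Q B k] gt by (auto simp: max_def)
    then show ?thesis using Lk Lq blocks_above_append_to[OF Q B rsn] gt 1 by simp
  next
    case 2
    have "rstart (append_to n Q B) k = ?b" using rstart_append_to[OF Q B k] 2 j by (auto simp: max_def)
    then show ?thesis using Lk blocks_above_append_to[OF Q B bn] 2 by simp
  next
    case 3
    have "rstart Q (k-1) \<le> rstart Q j" using rstart_antimono[OF Q j(1)] 3 by simp
    then have c: "\<not> (k = 1 \<or> ?b < rstart Q (k-1))" using 3 j by simp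
    have "rstart Q k \<le> rstart Q j" using rstart_antimono[OF Q j(1)] 3 by simp
    then have lt: "rstart Q k < ?b" using j by simp
    have "rstart (append_to n Q B) k = rstart Q k" using rstart_append_to[OF Q B k] c by simp
    then show ?thesis using Lk Lq blocks_above_append_to[OF Q B rsn] lt 3 by simp
  qed
qed

section \<open>The generating tree\<close>

definition attachable :: "nat \<Rightarrow> nat set set \<Rightarrow> nat set set" where
  "attachable m Q = {B\<in>Q. rstart Q m < Max B}"

definition extend :: "nat \<Rightarrow> nat set set \<Rightarrow> nat set option \<Rightarrow> nat set set" where
  "extend n Q c = (case c of None \<Rightarrow> add_singleton n Q | Some B \<Rightarrow> append_to n Q B)"

definition extension_choices :: "nat \<Rightarrow> nat set set \<Rightarrow> nat set option set" where
  "extension_choices m Q = insert None (Some ` attachable m Q)"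

definition delete_last :: "nat \<Rightarrow> nat set set \<Rightarrow> nat set set" where
  "delete_last n P = (\<lambda>B. B - {Suc n}) ` P - {{}}"

lemma set_option_extension_choices: "c \<in> extension_choices m Q \<Longrightarrow> set_option c \<subseteq> Q"
  unfolding extension_choices_def attachable_def by auto

lemma delete_last_add_singleton:
  assumes Q: "partition_on {1..(n::nat)} Q"
  shows "delete_last n (add_singleton n Q) = Q"
proof -
  have "\<forall>B\<in>Q. B - {Suc n} = B" using Suc_notin_Union[OF Q] by auto
  then have "(\<lambda>B. B - {Suc n}) ` Q = id ` Q" by (intro image_cong) auto
  then have "(\<lambda>B. B - {Suc n}) ` Q = Q" by simp
  moreover have "{} \<notin> Q" using Q unfolding partition_on_def by simp
  ultimately show ?thesis unfolding delete_last_def by auto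
qed

lemma delete_last_append_to:
  assumes Q: "partition_on {1..(n::nat)} Q" and B: "B \<in> Q"
  shows "delete_last n (append_to n Q B) = Q"
proof -
  have s: "\<forall>C\<in>Q. C - {Suc n} = C" using Suc_notin_Union[OF Q] by auto
  then have "(\<lambda>C. C - {Suc n}) ` (Q - {B}) = id ` (Q - {B})" by (intro image_cong) auto
  then have "(\<lambda>C. C - {Suc n}) ` (Q - {B}) = Q - {B}" by simp
  moreover have "insert (Suc n) B - {Suc n} = B" using s B by auto
  moreover have "{} \<notin> Q" using Q unfolding partition_on_def by simp
  ultimately show ?thesis unfolding delete_last_def using B by auto
qed

lemma delete_last_extend:
  assumes "partition_on {1..(n::nat)} Q" "set_option c \<subseteq> Q"
  shows "delete_last n (extend n Q c) = Q"
proof (cases c)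
  case None
  then show ?thesis using delete_last_add_singleton[OF assms(1)] by (simp add: extend_def)
next
  case (Some B)
  then show ?thesis using delete_last_append_to[OF assms(1)] assms(2) by (simp add: extend_def)
qed

lemma extend_choice_eq:
  assumes Q: "partition_on {1..(n::nat)} Q" and c: "set_option c \<subseteq> Q" "set_option c' \<subseteq> Q"
    and eq: "extend n Q c = extend n Q c'"
  shows "c = c'"
proof -
  define new_block where "new_block d = insert (Suc n) (case d of None \<Rightarrow> {} | Some B \<Rightarrow> B)" for d
  have fresh: "Suc n \<notin> B" "B \<noteq> {}" if "B \<in> Q" for B
    using that Suc_notin_Union[OF Q] partition_blockD(2)[OF Q] by auto
  have new_block_in: "new_block d \<in> extend n Q d" for d
    unfolding new_block_def extend_def by (cases d) auto
  have new_block_unique: "X = new_block d" if "set_option d \<subseteq> Q" "X \<in> extend n Q d" "Suc n \<in> X" for d X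
    using that fresh unfolding new_block_def extend_def by (cases d) auto
  have "new_block c = new_block c'"
    using new_block_unique[OF c(2)] new_block_in[of c] eq unfolding new_block_def by simp
  then show ?thesis
    using c fresh unfolding new_block_def by (cases c; cases c') (auto simp: insert_ident)
qed

lemma inj_on_extend: "inj_on (\<lambda>(Q,c). extend n Q c) (SIGMA Q:Pi_m m n. extension_choices m Q)"
proof (rule inj_onI)
  fix x y
  assume x: "x \<in> (SIGMA Q:Pi_m m n. extension_choices m Q)"
    and y: "y \<in> (SIGMA Q:Pi_m m n. extension_choices m Q)"
    and xy: "(\<lambda>(Q,c). extend n Q c) x = (\<lambda>(Q,c). extend n Q c) y"
  obtain Q c where xe: "x = (Q,c)" by (metis surj_pair)
  obtain Q' c' where ye: "y = (Q',c')" by (metis surj_pair)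
  have Q: "partition_on {1..n} Q" "partition_on {1..n} Q'" using x y xe ye Pi_mD by auto
  have c: "set_option c \<subseteq> Q" "set_option c' \<subseteq> Q'"
    using x y xe ye set_option_extension_choices by auto
  have eq: "extend n Q c = extend n Q' c'" using xy xe ye by simp
  have "Q = Q'" using delete_last_extend[OF Q(1) c(1)] delete_last_extend[OF Q(2) c(2)] eq by simp
  then have "c = c'" using extend_choice_eq[OF Q(1) c(1)] c(2) eq by simp
  then show "x = y" using xe ye \<open>Q = Q'\<close> by simp
qed

lemma extend_in_Pi_m:
  assumes m: "1 \<le> m" and Q: "Q \<in> Pi_m m n" and c: "c \<in> extension_choices m Q"
  shows "extend n Q c \<in> Pi_m m (Suc n)"
  using c add_singleton_in_Pi_m[OF Q] append_to_in_Pi_m_iff[OF Q m]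
  unfolding extension_choices_def attachable_def extend_def by auto

lemma partition_Suc_cases:
  assumes P: "partition_on {1..Suc n} P"
  obtains Q c where "partition_on {1..n} Q" "set_option c \<subseteq> Q" "P = extend n Q c"
proof -
  have "Suc n \<in> \<Union>P" using P unfolding partition_on_def by simp
  then obtain B0 where B0: "B0 \<in> P" "Suc n \<in> B0" by blast
  have e0: "P = insert B0 (P - {B0})" using B0 by auto
  have r0: "partition_on ({1..Suc n} - B0) (P - {B0})" using partition_remove_block[OF P B0(1)] .
  show ?thesis
  proof (cases "B0 = {Suc n}")
    case True
    have "{1..Suc n} - B0 = {1..n}" using True by auto
    then have "partition_on {1..n} (P - {B0})" using r0 by simp
    moreover have "P = extend n (P - {B0}) None" using True e0 unfolding extend_def by simp
    ultimately show ?thesis using that by fastforce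
  next
    case False
    let ?B = "B0 - {Suc n}"
    let ?Q = "insert ?B (P - {B0})"
    have Bne: "?B \<noteq> {}" using False B0(2) by auto
    have B0s: "B0 \<subseteq> {1..Suc n}" using partition_blockD(3)[OF P B0(1)] .
    have d: "disjnt ?B (\<Union>(P - {B0}))"
      using P B0 unfolding partition_on_def disjoint_def disjnt_def by blast
    have "{1..n} - ?B = {1..Suc n} - B0" using B0s B0(2) by (auto simp: le_Suc_eq)
    moreover have "?B \<subseteq> {1..n}" using B0s by auto
    ultimately have Qp: "partition_on {1..n} ?Q"
      using partition_on_insert[OF d, of "{1..n}"] r0 Bne by simp
    have "?B \<notin> P - {B0}"
    proof
      assume "?B \<in> P - {B0}"
      then have "?B \<inter> B0 = {}"
        using P B0(1) disjointD[of P ?B B0] unfolding partition_on_def by auto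
      then show False using Bne by auto
    qed
    then have "?Q - {?B} = P - {B0}" by auto
    moreover have "insert (Suc n) ?B = B0" using B0(2) by auto
    ultimately have "P = extend n ?Q (Some ?B)" using e0 unfolding extend_def by simp
    then show ?thesis using that[OF Qp, of "Some ?B"] by simp
  qed
qed

lemma nesting_starts_mono: "A \<subseteq> A' \<Longrightarrow> nesting_starts A k \<subseteq> nesting_starts A' k"
  unfolding nesting_starts_def nesting_in_def by blast

lemma arcs_subset_extend:
  assumes "partition_on {1..(n::nat)} Q" "set_option c \<subseteq> Q"
  shows "arcs Q \<subseteq> arcs (extend n Q c)"
proof (cases c)
  case None
  then show ?thesis by (simp add: extend_def arcs_add_singleton)
next
  case (Some B)
  then show ?thesis using arcs_append_to[OF assms(1)] assms(2) by (auto simp: extend_def)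
qed

lemma Pi_m_Suc_extend_cases:
  assumes m: "1 \<le> m" and P: "P \<in> Pi_m m (Suc n)"
  obtains Q c where "Q \<in> Pi_m m n" "c \<in> extension_choices m Q" "P = extend n Q c"
proof -
  have PP: "partition_on {1..Suc n} P" and eP: "nesting_starts (arcs P) (Suc m) = {}"
    using Pi_mD[OF P] by auto
  obtain Q c where Q: "partition_on {1..n} Q" "set_option c \<subseteq> Q" "P = extend n Q c"
    using partition_Suc_cases[OF PP] .
  have "nesting_starts (arcs Q) (Suc m) = {}"
    using nesting_starts_mono[OF arcs_subset_extend[OF Q(1,2)]] eP Q(3) by auto
  then have QPi: "Q \<in> Pi_m m n" by (rule Pi_mI[OF Q(1)])
  have "c \<in> extension_choices m Q"
  proof (cases c)
    case (Some B)
    then have "B \<in> Q" using Q(2) by simp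
    then show ?thesis using append_to_in_Pi_m_iff[OF QPi m] P Q(3) Some
      unfolding extension_choices_def attachable_def extend_def by simp
  qed (simp add: extension_choices_def)
  then show ?thesis using that QPi Q(3) by blast
qed

lemma Pi_m_Suc_eq_image_extend:
  assumes m: "1 \<le> m"
  shows "Pi_m m (Suc n) = (\<lambda>(Q,c). extend n Q c) ` (SIGMA Q:Pi_m m n. extension_choices m Q)"
proof (intro equalityI subsetI)
  fix P assume "P \<in> Pi_m m (Suc n)"
  then obtain Q c where "Q \<in> Pi_m m n" "c \<in> extension_choices m Q" "P = extend n Q c"
    by (rule Pi_m_Suc_extend_cases[OF m])
  then show "P \<in> (\<lambda>(Q,c). extend n Q c) ` (SIGMA Q:Pi_m m n. extension_choices m Q)" by force
qed (auto intro: extend_in_Pi_m[OF m])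

lemma finite_extension_choices:
  assumes "Q \<in> Pi_m m n" shows "finite (extension_choices m Q)"
  using partition_finite[OF conjunct1[OF Pi_mD[OF assms]]]
  unfolding extension_choices_def attachable_def by simp

lemma sum_Pi_m_Suc:
  assumes m: "1 \<le> m"
  shows "(\<Sum>P\<in>Pi_m m (Suc n). f P) =
    (\<Sum>Q\<in>Pi_m m n. \<Sum>c\<in>extension_choices m Q. f (extend n Q c))"
proof -
  have "(\<Sum>P\<in>Pi_m m (Suc n). f P) =
      (\<Sum>x\<in>(SIGMA Q:Pi_m m n. extension_choices m Q). f ((\<lambda>(Q,c). extend n Q c) x))"
    unfolding Pi_m_Suc_eq_image_extend[OF m] by (rule sum.reindex[OF inj_on_extend, unfolded comp_def])
  also have "\<dots> = (\<Sum>(Q,c)\<in>(SIGMA Q:Pi_m m n. extension_choices m Q). f (extend n Q c))"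
    by (simp add: case_prod_unfold)
  also have "\<dots> = (\<Sum>Q\<in>Pi_m m n. \<Sum>c\<in>extension_choices m Q. f (extend n Q c))"
    using finite_Pi_m finite_extension_choices by (subst sum.Sigma) auto
  finally show ?thesis .
qed

lemma sum_extension_choices:
  assumes Q: "Q \<in> Pi_m m n"
  shows "(\<Sum>c\<in>extension_choices m Q. f (extend n Q c)) =
    f (add_singleton n Q) + (\<Sum>B\<in>attachable m Q. f (append_to n Q B))"
proof -
  have "finite Q" using partition_finite Pi_mD[OF Q] by blast
  then have "finite (attachable m Q)" unfolding attachable_def by simp
  then show ?thesis unfolding extension_choices_def by (simp add: sum.reindex extend_def)
qed

section \<open>Levels of attachable blocks\<close>

definition level_bound :: "nat \<Rightarrow> nat set set \<Rightarrow> nat \<Rightarrow> nat" where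
  "level_bound n Q j = (if j = 1 then Suc n else rstart Q (j-1))"

definition level :: "nat \<Rightarrow> nat set set \<Rightarrow> nat \<Rightarrow> nat set set" where
  "level n Q j = {B\<in>Q. rstart Q j < Max B \<and> Max B < level_bound n Q j}"

lemma rstart_le_level_bound:
  assumes Q: "partition_on {1..(n::nat)} Q" and j: "1 \<le> j"
  shows "rstart Q j \<le> level_bound n Q j"
proof (cases "j = 1")
  case True
  then show ?thesis unfolding level_bound_def rstart_def
    using rstart_in_le[OF arcs_within_arcs[OF Q], of j] by simp
next
  case False
  then have "1 \<le> j - 1" using j by auto
  then show ?thesis unfolding level_bound_def using rstart_antimono[OF Q, of "j-1" j] False by simp
qed

lemma Max_neq_level_bound:
  assumes Q: "partition_on {1..(n::nat)} Q" and j: "1 \<le> j" and B: "B \<in> Q"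
  shows "Max B \<noteq> level_bound n Q j"
proof (cases "j = 1")
  case True
  then show ?thesis unfolding level_bound_def using partition_Max_block(3)[OF Q B] by simp
next
  case False
  then have "1 \<le> j - 1" using j by auto
  then show ?thesis unfolding level_bound_def using rstart_neq_Max[OF Q _ B, of "j-1"] False by auto
qed

lemma attachable_eq_UN_level:
  assumes Q: "partition_on {1..(n::nat)} Q" and m: "1 \<le> m"
  shows "attachable m Q = (\<Union>j\<in>{1..m}. level n Q j)"
proof (intro equalityI subsetI)
  fix B assume "B \<in> attachable m Q"
  then have B: "B \<in> Q" "rstart Q m < Max B" unfolding attachable_def by auto
  define j where "j = (LEAST j. 1 \<le> j \<and> rstart Q j < Max B)"
  have ex: "1 \<le> m \<and> rstart Q m < Max B" using B m by simp
  have j: "1 \<le> j" "rstart Q j < Max B"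
    using LeastI[of "\<lambda>j. 1 \<le> j \<and> rstart Q j < Max B", OF ex] unfolding j_def by auto
  have jm: "j \<le> m"
    using Least_le[of "\<lambda>j. 1 \<le> j \<and> rstart Q j < Max B", OF ex] unfolding j_def by simp
  have "Max B < level_bound n Q j"
  proof (cases "j = 1")
    case True then show ?thesis unfolding level_bound_def using partition_Max_block(3)[OF Q B(1)] by simp
  next
    case False
    then have "\<not> (1 \<le> j - 1 \<and> rstart Q (j-1) < Max B)"
      using not_less_Least[of "j-1" "\<lambda>j. 1 \<le> j \<and> rstart Q j < Max B"] j(1) unfolding j_def by fastforce
    moreover have "1 \<le> j - 1" using False j(1) by linarith
    ultimately have "Max B \<le> rstart Q (j-1)" by simp
    moreover have "rstart Q (j-1) \<noteq> Max B" using rstart_neq_Max[OF Q _ B(1), of "j-1"] False j(1) by simp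
    ultimately show ?thesis unfolding level_bound_def using False by simp
  qed
  then have "B \<in> level n Q j" unfolding level_def using B j by simp
  then show "B \<in> (\<Union>j\<in>{1..m}. level n Q j)" using j jm by auto
next
  fix B assume "B \<in> (\<Union>j\<in>{1..m}. level n Q j)"
  then obtain j where j: "j \<in> {1..m}" "B \<in> level n Q j" by blast
  then have "rstart Q m \<le> rstart Q j" using rstart_antimono[OF Q] by simp
  then show "B \<in> attachable m Q" using j unfolding level_def attachable_def by auto
qed

lemma level_disjoint:
  assumes Q: "partition_on {1..(n::nat)} Q" and j: "1 \<le> j" "j < j'"
  shows "level n Q j \<inter> level n Q j' = {}"
proof -
  have "rstart Q (j'-1) \<le> rstart Q j" using rstart_antimono[OF Q j(1)] j by simp
  moreover have "j' \<noteq> 1" using j by simp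
  ultimately show ?thesis unfolding level_def level_bound_def by auto
qed

lemma sum_attachable_eq_sum_levels:
  assumes Q: "partition_on {1..(n::nat)} Q" and m: "1 \<le> m"
  shows "(\<Sum>B\<in>attachable m Q. f B) = (\<Sum>j\<in>{1..m}. \<Sum>B\<in>level n Q j. f B)"
  unfolding attachable_eq_UN_level[OF Q m]
proof (rule sum.UNION_disjoint)
  show "\<forall>j\<in>{1..m}. finite (level n Q j)" unfolding level_def using partition_finite[OF Q] by simp
  show "\<forall>i\<in>{1..m}. \<forall>j\<in>{1..m}. i \<noteq> j \<longrightarrow> level n Q i \<inter> level n Q j = {}"
  proof (intro ballI impI)
    fix i j assume "i \<in> {1..m}" "j \<in> {1..m}" "i \<noteq> j"
    then show "level n Q i \<inter> level n Q j = {}"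
      using level_disjoint[OF Q, of i j] level_disjoint[OF Q, of j i] by (cases "i < j") auto
  qed
qed simp

lemma bij_betw_blocks_above_Max:
  assumes Q: "partition_on {1..(n::nat)} Q" and xy: "x \<le> y" and ny: "\<forall>B\<in>Q. Max B \<noteq> y"
  shows "bij_betw (\<lambda>B. blocks_above Q (Max B))
    {B\<in>Q. x < Max B \<and> Max B < y} {blocks_above Q y..<blocks_above Q x}"
proof -
  let ?level = "{B\<in>Q. x < Max B \<and> Max B < y}"
  let ?f = "\<lambda>B. blocks_above Q (Max B)"
  have f: "finite Q" using partition_finite[OF Q] .
  have inj: "inj_on ?f ?level"
  proof (rule inj_onI)
    fix B B' assume a: "B \<in> ?level" "B' \<in> ?level" "?f B = ?f B'"
    have "Max B = Max B'"
    proof (rule ccontr)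
      assume "Max B \<noteq> Max B'"
      then consider "Max B < Max B'" | "Max B' < Max B" by linarith
      then show False
      proof cases
        case 1 then show False using blocks_above_Max_less[OF Q, of B' "Max B"] a by simp
      next
        case 2 then show False using blocks_above_Max_less[OF Q, of B "Max B'"] a by simp
      qed
    qed
    then show "B = B'"
      using partition_block_eq[OF Q _ _ partition_Max_block(1)[OF Q]] partition_Max_block(1)[OF Q] a by (metis (no_types, lifting) mem_Collect_eq)
  qed
  have sub: "?f ` ?level \<subseteq> {blocks_above Q y..<blocks_above Q x}"
  proof
    fix t assume "t \<in> ?f ` ?level"
    then obtain B where B: "B \<in> ?level" "t = ?f B" by blast
    have "blocks_above Q y \<le> t" using blocks_above_antimono[OF Q, of "Max B" y] B by simp
    moreover have "t < blocks_above Q x" using blocks_above_Max_less[OF Q, of B x] B by simp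
    ultimately show "t \<in> {blocks_above Q y..<blocks_above Q x}" by simp
  qed
  have "{C\<in>Q. x < Max C} = {C\<in>Q. y < Max C} \<union> ?level" using xy ny by fastforce
  moreover have "{C\<in>Q. y < Max C} \<inter> ?level = {}" by auto
  ultimately have "blocks_above Q x = blocks_above Q y + card ?level" unfolding blocks_above_def using f
    by (simp add: card_Un_disjoint)
  then have "card (?f ` ?level) = card {blocks_above Q y..<blocks_above Q x}" using card_image[OF inj] by simp
  then have "?f ` ?level = {blocks_above Q y..<blocks_above Q x}" using sub by (intro card_subset_eq) auto
  then show ?thesis using inj unfolding bij_betw_def by simp
qed

section \<open>Weights\<close>

lemma sum_power_atLeastLessThan_mult:
  fixes x :: "'a::comm_ring_1"
  assumes "p \<le> q"
  shows "(x - 1) * (\<Sum>t\<in>{p..<q}. x ^ t) = x ^ q - x ^ p"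
  using assms
proof (induction q rule: dec_induct)
  case base then show ?case by simp
next
  case (step q)
  then show ?case by (simp add: algebra_simps)
qed

lemma sum_power_shift2_atLeastLessThan:
  fixes x :: "'a::field"
  assumes "p \<le> q" "x \<noteq> 1"
  shows "(\<Sum>t\<in>{p..<q}. x ^ (t + 2)) = x^2 * (x ^ q - x ^ p) / (x - 1)"
proof -
  have "(\<Sum>t\<in>{p..<q}. x ^ (t + 2)) = x^2 * (\<Sum>t\<in>{p..<q}. x ^ t)"
    by (simp add: sum_distrib_left power_add power2_eq_square mult_ac)
  also have "\<dots> = x^2 * ((x - 1) * (\<Sum>t\<in>{p..<q}. x ^ t)) / (x - 1)" using assms(2) by simp
  also have "\<dots> = x^2 * (x ^ q - x ^ p) / (x - 1)"
    by (simp only: sum_power_atLeastLessThan_mult[OF assms(1)])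
  finally show ?thesis .
qed

definition weight :: "nat \<Rightarrow> (nat \<Rightarrow> real) \<Rightarrow> nat set set \<Rightarrow> real" where
  "weight m v P = (\<Prod>k=1..m. v k ^ label P k)"

definition level_factor :: "nat \<Rightarrow> (nat \<Rightarrow> real) \<Rightarrow> nat set set \<Rightarrow> nat \<Rightarrow> real" where
  "level_factor m u Q j = (\<Prod>k\<in>{1..m}-{j}. u k ^ (if k < j then Suc (label Q k) else label Q k))"

lemma weight_split:
  assumes "j \<in> {1..m}"
  shows "weight m v Q = v j ^ label Q j * (\<Prod>k\<in>{1..m}-{j}. v k ^ label Q k)"
  unfolding weight_def using assms by (simp add: prod.remove)

lemma weight_append_to:
  assumes Q: "partition_on {1..(n::nat)} Q" and j: "j \<in> {1..m}" and B: "B \<in> level n Q j"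
  shows "weight m u (append_to n Q B) = level_factor m u Q j * u j ^ (blocks_above Q (Max B) + 2)"
proof -
  have BQ: "B \<in> Q" and c: "rstart Q j < Max B" "j = 1 \<or> Max B < rstart Q (j-1)"
    using B unfolding level_def level_bound_def by (auto split: if_splits)
  have L: "\<And>k. k \<in> {1..m} \<Longrightarrow> label (append_to n Q B) k =
     (if k < j then Suc (label Q k) else if k = j then blocks_above Q (Max B) + 2 else label Q k)"
    using label_append_to[OF Q BQ _ _ c] j by simp
  have "weight m u (append_to n Q B) =
      u j ^ label (append_to n Q B) j * (\<Prod>k\<in>{1..m}-{j}. u k ^ label (append_to n Q B) k)"
    by (rule weight_split[OF j])
  also have "(\<Prod>k\<in>{1..m}-{j}. u k ^ label (append_to n Q B) k) = level_factor m u Q j"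
    unfolding level_factor_def by (rule prod.cong) (auto simp: L)
  finally show ?thesis using L[OF j] by simp
qed

lemma sum_weight_level:
  assumes Q: "partition_on {1..(n::nat)} Q" and j: "j \<in> {1..m}"
  shows "(\<Sum>B\<in>level n Q j. weight m u (append_to n Q B)) = level_factor m u Q j *
    (\<Sum>t\<in>{blocks_above Q (level_bound n Q j)..<blocks_above Q (rstart Q j)}. u j ^ (t + 2))"
proof -
  let ?I = "{blocks_above Q (level_bound n Q j)..<blocks_above Q (rstart Q j)}"
  have j1: "1 \<le> j" using j by simp
  have "\<forall>B\<in>Q. Max B \<noteq> level_bound n Q j" using Max_neq_level_bound[OF Q j1] by blast
  then have bij: "bij_betw (\<lambda>B. blocks_above Q (Max B)) (level n Q j) ?I"
    using bij_betw_blocks_above_Max[OF Q rstart_le_level_bound[OF Q j1]] unfolding level_def by blast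
  have "(\<Sum>B\<in>level n Q j. weight m u (append_to n Q B)) =
      (\<Sum>B\<in>level n Q j. level_factor m u Q j * u j ^ (blocks_above Q (Max B) + 2))"
    using weight_append_to[OF Q j] by simp
  also have "\<dots> = level_factor m u Q j * (\<Sum>B\<in>level n Q j. u j ^ (blocks_above Q (Max B) + 2))"
    by (simp add: sum_distrib_left)
  also have "(\<Sum>B\<in>level n Q j. u j ^ (blocks_above Q (Max B) + 2)) = (\<Sum>t\<in>?I. u j ^ (t + 2))"
    using sum.reindex_bij_betw[OF bij, of "\<lambda>t. u j ^ (t + 2)"] by simp
  finally show ?thesis .
qed

lemma level_factor_eq:
  assumes j: "j \<in> {1..m}"
  shows "level_factor m u Q j = (\<Prod>k\<in>{1..m}-{j}. u k ^ label Q k) * (\<Prod>k\<in>{1..<j}. u k)"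
proof -
  have "level_factor m u Q j = (\<Prod>k\<in>{1..m}-{j}. u k ^ label Q k * (if k < j then u k else 1))"
    unfolding level_factor_def by (rule prod.cong) auto
  also have "\<dots> = (\<Prod>k\<in>{1..m}-{j}. u k ^ label Q k) * (\<Prod>k\<in>{1..m}-{j}. if k < j then u k else 1)"
    by (rule prod.distrib)
  also have "(\<Prod>k\<in>{1..m}-{j}. if k < j then u k else 1) = (\<Prod>k\<in>{k\<in>{1..m}-{j}. k < j}. u k)"
    by (rule prod.inter_filter[symmetric]) simp
  also have "{k\<in>{1..m}-{j}. k < j} = {1..<j}" using j by auto
  finally show ?thesis .
qed

lemma sum_weight_level_eq:
  assumes Q: "partition_on {1..(n::nat)} Q" and j: "j \<in> {1..m}" and uj: "u j \<noteq> 1"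
  shows "(\<Sum>B\<in>level n Q j. weight m u (append_to n Q B)) =
    (\<Prod>i=1..j. u i) * (weight m u Q -
      u j ^ Suc (blocks_above Q (level_bound n Q j)) * (\<Prod>k\<in>{1..m}-{j}. u k ^ label Q k)) / (u j - 1)"
proof -
  let ?D = "\<Prod>k\<in>{1..m}-{j}. u k ^ label Q k"
  let ?lo = "blocks_above Q (level_bound n Q j)" and ?hi = "blocks_above Q (rstart Q j)"
  have "rstart Q j \<le> level_bound n Q j" using rstart_le_level_bound[OF Q] j by simp
  then have "?lo \<le> ?hi" by (rule blocks_above_antimono[OF Q])
  then have "(\<Sum>t\<in>{?lo..<?hi}. u j ^ (t + 2)) = u j ^ 2 * (u j ^ ?hi - u j ^ ?lo) / (u j - 1)"
    using uj by (rule sum_power_shift2_atLeastLessThan)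
  then have "(\<Sum>B\<in>level n Q j. weight m u (append_to n Q B)) =
      (?D * (\<Prod>k\<in>{1..<j}. u k)) * (u j ^ 2 * (u j ^ ?hi - u j ^ ?lo) / (u j - 1))"
    using sum_weight_level[OF Q j] level_factor_eq[OF j] by (simp only:)
  moreover have "weight m u Q = u j ^ Suc ?hi * ?D"
    using weight_split[OF j] label_eq_blocks_above[OF Q] j by simp
  moreover have "(\<Prod>i=1..j. u i) = (\<Prod>k\<in>{1..<j}. u k) * u j"
    using j by (simp add: atLeastLessThanSuc_atLeastAtMost[symmetric] prod.atLeastLessThan_Suc)
  ultimately show ?thesis using uj by (simp add: field_simps power2_eq_square)
qed

lemma sum_weight_first_level:
  assumes Q: "partition_on {1..(n::nat)} Q" and m: "1 \<le> m" and u1: "u 1 \<noteq> 1"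
  shows "(\<Sum>B\<in>level n Q 1. weight m u (append_to n Q B)) =
    u 1 * (weight m u Q - u 1 * weight m (u(1 := 1)) Q) / (u 1 - 1)"
proof -
  have "{B\<in>Q. Suc n < Max B} = {}" using partition_Max_block(3)[OF Q] by fastforce
  then have lo: "blocks_above Q (level_bound n Q 1) = 0"
    unfolding blocks_above_def level_bound_def by (simp only: if_True refl card.empty)
  have "weight m (u(1 := 1)) Q = (\<Prod>k\<in>{1..m}-{1}. (u(1 := 1)) k ^ label Q k)"
    using weight_split[of 1 m "u(1 := 1)" Q] m by simp
  also have "\<dots> = (\<Prod>k\<in>{1..m}-{1}. u k ^ label Q k)" by (rule prod.cong) auto
  finally show ?thesis using sum_weight_level_eq[of n Q 1 m u] Q u1 m lo by simp
qed

lemma weight_merge_levels: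
  assumes j: "2 \<le> j" "j \<le> m"
  shows "weight m (u(j - 1 := u (j - 1) * u j, j := 1)) Q =
    u j ^ label Q (j-1) * (\<Prod>k\<in>{1..m}-{j}. u k ^ label Q k)"
proof -
  let ?v = "u(j - 1 := u (j - 1) * u j, j := 1)"
  have jj: "j \<in> {1..m}" using j by simp
  have jm: "j - 1 \<in> {1..m}-{j}" using j by auto
  have "weight m ?v Q = (\<Prod>k\<in>{1..m}-{j}. ?v k ^ label Q k)" using weight_split[OF jj, of ?v Q] by simp
  also have "\<dots> = (\<Prod>k\<in>{1..m}-{j}. u k ^ label Q k * (if k = j - 1 then u j ^ label Q k else 1))"
    by (rule prod.cong) (auto simp: power_mult_distrib)
  also have "\<dots> = (\<Prod>k\<in>{1..m}-{j}. u k ^ label Q k) *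
      (\<Prod>k\<in>{1..m}-{j}. if k = j - 1 then u j ^ label Q k else 1)"
    by (rule prod.distrib)
  also have "(\<Prod>k\<in>{1..m}-{j}. if k = j - 1 then u j ^ label Q k else 1) = u j ^ label Q (j-1)"
    using jm by (subst prod.delta) auto
  finally show ?thesis by (simp only: mult.commute)
qed

lemma sum_weight_higher_level:
  assumes Q: "partition_on {1..(n::nat)} Q" and j: "2 \<le> j" "j \<le> m" and uj: "u j \<noteq> 1"
  shows "(\<Sum>B\<in>level n Q j. weight m u (append_to n Q B)) =
    (\<Prod>i=1..j. u i) * (weight m u Q - weight m (u(j - 1 := u (j - 1) * u j, j := 1)) Q) / (u j - 1)"
proof -
  have "Suc (blocks_above Q (level_bound n Q j)) = label Q (j-1)"
    using label_eq_blocks_above[OF Q, of "j-1"] j unfolding level_bound_def by simp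
  then show ?thesis using sum_weight_level_eq[of n Q j m u] Q uj weight_merge_levels[OF j] j by simp
qed

lemma weight_add_singleton:
  assumes Q: "partition_on {1..(n::nat)} Q"
  shows "weight m u (add_singleton n Q) = (\<Prod>i=1..m. u i) * weight m u Q"
proof -
  have "weight m u (add_singleton n Q) = (\<Prod>k=1..m. u k * u k ^ label Q k)"
    unfolding weight_def by (rule prod.cong) (auto simp: label_add_singleton[OF Q])
  then show ?thesis unfolding weight_def by (simp add: prod.distrib)
qed

lemma sum_weight_extensions:
  assumes Q: "Q \<in> Pi_m m n" and m: "1 \<le> m" and u: "\<forall>j\<in>{1..m}. u j \<noteq> 1"
  shows "(\<Sum>c\<in>extension_choices m Q. weight m u (extend n Q c)) =
     (\<Prod>i=1..m. u i) * weight m u Q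
   + u 1 * (weight m u Q - u 1 * weight m (u(1 := 1)) Q) / (u 1 - 1)
   + (\<Sum>j=2..m. (\<Prod>i=1..j. u i) *
       (weight m u Q - weight m (u(j - 1 := u (j - 1) * u j, j := 1)) Q) / (u j - 1))"
proof -
  have P: "partition_on {1..n} Q" using Pi_mD[OF Q] by simp
  have u1: "u 1 \<noteq> 1" using u m by simp
  let ?L = "\<lambda>j. \<Sum>B\<in>level n Q j. weight m u (append_to n Q B)"
  have "{1..m} = insert 1 {2..m}" using m by auto
  then have "(\<Sum>B\<in>attachable m Q. weight m u (append_to n Q B)) = ?L 1 + (\<Sum>j=2..m. ?L j)"
    using sum_attachable_eq_sum_levels[OF P m] by simp
  also have "(\<Sum>j=2..m. ?L j) = (\<Sum>j=2..m. (\<Prod>i=1..j. u i) *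
      (weight m u Q - weight m (u(j - 1 := u (j - 1) * u j, j := 1)) Q) / (u j - 1))"
    using sum_weight_higher_level[OF P] u by (intro sum.cong) auto
  finally show ?thesis
    using sum_extension_choices[OF Q, of "weight m u"] weight_add_singleton[OF P] sum_weight_first_level[where u = u, OF P m u1]
    by simp
qed

lemma Fcoeff_eq_sum_weight: "Fcoeff m v n = (\<Sum>P\<in>Pi_m m n. weight m v P)"
  unfolding Fcoeff_def weight_def ..

lemma sum_scaled_diff: "(\<Sum>Q\<in>S. c * (f Q - g Q) / e) = (c::'a::field) * (sum f S - sum g S) / e"
  by (simp add: sum_subtractf[symmetric] sum_distrib_left sum_divide_distrib)

lemma Fcoeff_Suc:
  assumes m: "1 \<le> m" and u: "\<forall>j\<in>{1..m}. u j \<noteq> 1"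
  shows "Fcoeff m u (Suc n) =
     (\<Prod>i=1..m. u i) * Fcoeff m u n
   + u 1 * (Fcoeff m u n - u 1 * Fcoeff m (u(1 := 1)) n) / (u 1 - 1)
   + (\<Sum>j=2..m. (\<Prod>i=1..j. u i) *
       (Fcoeff m u n - Fcoeff m (u(j - 1 := u (j - 1) * u j, j := 1)) n) / (u j - 1))"
proof -
  have "Fcoeff m u (Suc n) = (\<Sum>Q\<in>Pi_m m n. \<Sum>c\<in>extension_choices m Q. weight m u (extend n Q c))"
    unfolding Fcoeff_eq_sum_weight by (rule sum_Pi_m_Suc[OF m])
  also have "\<dots> = (\<Sum>Q\<in>Pi_m m n. (\<Prod>i=1..m. u i) * weight m u Q
   + u 1 * (weight m u Q - u 1 * weight m (u(1 := 1)) Q) / (u 1 - 1)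
   + (\<Sum>j=2..m. (\<Prod>i=1..j. u i) *
       (weight m u Q - weight m (u(j - 1 := u (j - 1) * u j, j := 1)) Q) / (u j - 1)))"
    by (rule sum.cong) (auto simp: sum_weight_extensions[OF _ m u])
  also have "\<dots> = (\<Prod>i=1..m. u i) * Fcoeff m u n
   + u 1 * (Fcoeff m u n - u 1 * Fcoeff m (u(1 := 1)) n) / (u 1 - 1)
   + (\<Sum>j=2..m. (\<Prod>i=1..j. u i) *
       (Fcoeff m u n - Fcoeff m (u(j - 1 := u (j - 1) * u j, j := 1)) n) / (u j - 1))"
    unfolding Fcoeff_eq_sum_weight sum.distrib
    by (simp add: sum_scaled_diff sum_distrib_left[symmetric] sum.swap[of _ "{2..m}"])
  finally show ?thesis .
qed

lemma Fcoeff_0: "Fcoeff m u 0 = (\<Prod>i=1..m. u i)"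
proof -
  have "Pi_m m 0 = {{}}"
    unfolding Pi_m_def set_partitions_def has_nesting_iff_nesting_starts
    by (auto simp: partition_on_empty arcs_def nesting_starts_def nesting_in_def)
  moreover have "label {} k = 1" for k
    unfolding label_def has_nesting_iff_nesting_starts
    by (auto simp: arcs_def nesting_starts_def nesting_in_def)
  ultimately show ?thesis unfolding Fcoeff_def by simp
qed

theorem proposition2:
  fixes m :: nat and u :: "nat \<Rightarrow> real"
  assumes "m \<ge> 1"
    and "\<forall>j\<in>{1..m}. u j \<noteq> 1"
  shows "Ftilde m u =
      fps_const (\<Prod>i=1..m. u i)
    + fps_X * fps_const (\<Prod>i=1..m. u i) * Ftilde m u
    + fps_X * fps_const (u 1) * (Ftilde m u - fps_const (u 1) * Ftilde m (u(1 := 1)))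
        / fps_const (u 1 - 1)
    + fps_X * (\<Sum>j=2..m. fps_const (\<Prod>i=1..j. u i) *
        (Ftilde m u - Ftilde m (u(j - 1 := u (j - 1) * u j, j := 1))) / fps_const (u j - 1))"
proof (rule fps_ext, goal_cases)
  case (1 k)
  show ?case
  proof (cases k)
    case 0
    then show ?thesis by (simp add: Ftilde_def Fcoeff_0 mult.assoc)
  next
    case (Suc n)
    then show ?thesis using Fcoeff_Suc[OF assms, of n]
      by (simp add: Ftilde_def mult.assoc fps_sum_nth divide_inverse mult_ac)
  qed
qed

end
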